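(* Let $N\ge 2$ and let $G$ be a bulkless graph on boundary vertices $v_1,\ldots,v_N$ which solves the DBRP for some contiguous entropy data $S$ on $N$ cyclically ordered atomic regions. Then there exists a planar weighted graph $H$, containing boundary vertices $v_1,\ldots,v_N$, with $O(N^4)$ vertices and $O(N^4)$ edges, which solves the DBRP for the same data $S$.
   Context: Atomic boundary regions are labelled $1,\ldots,N$ and arranged cyclically in this order. A contiguous region is a nonempty proper subset of $[N]$ of the form $\{a,a+1,\ldots,a+m\}$ (indices mod $N$). Contiguous entropy data is an assignment of a real number $S(R)\ge 0$ to each contiguous region $R$ with $S(R)=S([N]\setminus R)$. A weighted graph solves the DBRP for this data if it is a finite undirected graph with nonnegative real edge weights containing distinguished boundary vertices $v_1,\ldots,v_N$ such that for every contiguous $R$, the min-cut value between $\{v_i:i\in R\}$ and $\{v_j:j\notin R\}$ (the minimum total weight of an edge set whose removal disconnects every vertex of the first set from every vertex of the second) equals $S(R)$. A bulkless graph is a solution whose only vertices are $v_1,\ldots,v_N$ (a complete graph on them with nonnegative weights). *)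

theory Defs
  imports "HOL-Analysis.Analysis"
begin

text \<open>Atomic boundary regions are labelled 1..N, cyclically ordered.
  A contiguous region is a nonempty proper subset of {1..N} of the form
  {a, a+1, ..., a+m} with indices taken mod N.\<close>

definition cyc_region :: "nat \<Rightarrow> nat \<Rightarrow> nat \<Rightarrow> nat set" where
  "cyc_region N a m = {((a - 1 + k) mod N) + 1 | k. k \<le> m}"

definition contiguous :: "nat \<Rightarrow> nat set \<Rightarrow> bool" where
  "contiguous N R \<longleftrightarrow> R \<noteq> {} \<and> R \<subset> {1..N} \<and>
     (\<exists>a\<in>{1..N}. \<exists>m. R = cyc_region N a m)"

definition entropy_data :: "nat \<Rightarrow> (nat set \<Rightarrow> real) \<Rightarrow> bool" where
  "entropy_data N S \<longleftrightarrow>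
     (\<forall>R. contiguous N R \<longrightarrow> S R \<ge> 0 \<and> S R = S ({1..N} - R))"

definition is_graph :: "'v set \<Rightarrow> 'v set set \<Rightarrow> bool" where
  "is_graph V E \<longleftrightarrow> finite V \<and> (\<forall>e\<in>E. \<exists>x y. x \<noteq> y \<and> x \<in> V \<and> y \<in> V \<and> e = {x, y})"

definition connected_in :: "'v set set \<Rightarrow> 'v \<Rightarrow> 'v \<Rightarrow> bool" where
  "connected_in E x y \<longleftrightarrow> (x, y) \<in> {(a, b). {a, b} \<in> E}\<^sup>*"

definition is_cut :: "'v set set \<Rightarrow> 'v set set \<Rightarrow> 'v set \<Rightarrow> 'v set \<Rightarrow> bool" where
  "is_cut E F A B \<longleftrightarrow> F \<subseteq> E \<and> (\<forall>a\<in>A. \<forall>b\<in>B. \<not> connected_in (E - F) a b)"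

definition min_cut :: "'v set set \<Rightarrow> ('v set \<Rightarrow> real) \<Rightarrow> 'v set \<Rightarrow> 'v set \<Rightarrow> real" where
  "min_cut E w A B = Min {sum w F | F. is_cut E F A B}"

definition solves_DBRP ::
  "nat \<Rightarrow> (nat set \<Rightarrow> real) \<Rightarrow> 'v set \<Rightarrow> 'v set set \<Rightarrow> ('v set \<Rightarrow> real) \<Rightarrow> (nat \<Rightarrow> 'v) \<Rightarrow> bool" where
  "solves_DBRP N S V E w v \<longleftrightarrow>
     is_graph V E \<and> (\<forall>e\<in>E. w e \<ge> 0) \<and> v ` {1..N} \<subseteq> V \<and> inj_on v {1..N} \<and>
     (\<forall>R. contiguous N R \<longrightarrow> min_cut E w (v ` R) (v ` ({1..N} - R)) = S R)"

text \<open>Complete graph on the boundary labels 1..N (edge set of a bulkless graph).\<close>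
definition complete_edges :: "nat \<Rightarrow> nat set set" where
  "complete_edges N = {{i, j} | i j. i \<in> {1..N} \<and> j \<in> {1..N} \<and> i \<noteq> j}"

definition planar :: "'v set \<Rightarrow> 'v set set \<Rightarrow> bool" where
  "planar V E \<longleftrightarrow> (\<exists>(p :: 'v \<Rightarrow> complex) (\<gamma> :: 'v set \<Rightarrow> real \<Rightarrow> complex).
     inj_on p V \<and>
     (\<forall>e\<in>E. arc (\<gamma> e) \<and> {pathstart (\<gamma> e), pathfinish (\<gamma> e)} = p ` e \<and>
              path_image (\<gamma> e) \<inter> p ` V = p ` e) \<and>
     (\<forall>e\<in>E. \<forall>e'\<in>E. e \<noteq> e' \<longrightarrow> path_image (\<gamma> e) \<inter> path_image (\<gamma> e') \<subseteq> p ` (e \<inter> e')))"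

end

theory Submission
  imports Defs
begin

(* A bulkless solution is determined by its edge weights c: the minimal cut separating a region R
   from its complement is the total weight of the edges of the complete graph crossing R.
   Route every such edge {i, j}, i < j, through an (N + 1) x (N + 1) square grid whose boundary
   vertex k is the lattice point (k, 0): up column i to height j - i, along that row to column j,
   and down again; a grid edge gets the total weight of the routes through it.
   A cut separating R from its complement meets the route of every crossing edge, so it costs at
   least the bulkless entropy. Conversely, up to complement a contiguous region is an interval
   [a, b], and the grid edges leaving the box [a, b] x [0, b - a] form a cut that meets a route at
   most once, and only when its edge crosses [a, b]: a route with both ends in [a, b] rises only
   to height j - i <= b - a and stays in the box, while one spanning [a, b] passes above it.
   The grid is planar and has O(N^2) vertices and edges. *)

section \<open>Connectivity and cuts\<close>

lemma connected_in_refl: "connected_in E x x"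
  by (simp add: connected_in_def)

lemma connected_in_edge: "{x, y} \<in> E \<Longrightarrow> connected_in E x y"
  by (auto simp: connected_in_def)

lemma connected_in_trans [trans]: "connected_in E x y \<Longrightarrow> connected_in E y z \<Longrightarrow> connected_in E x z"
  unfolding connected_in_def by (rule rtrancl_trans)

lemma connected_in_sym: "connected_in E x y \<Longrightarrow> connected_in E y x"
proof -
  have "sym {(a, b). {a, b} \<in> E}" by (auto simp: sym_def insert_commute)
  then show "connected_in E x y \<Longrightarrow> connected_in E y x"
    unfolding connected_in_def by (metis rtrancl_converseD sym_conv_converse_eq sym_rtrancl)
qed

lemma connected_in_mono:
  assumes "E \<subseteq> E'" and "connected_in E x y"
  shows "connected_in E' x y"
proof -
  have "{(a, b). {a, b} \<in> E} \<subseteq> {(a, b). {a, b} \<in> E'}" using assms(1) by auto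
  from rtrancl_mono[OF this] show ?thesis using assms(2) unfolding connected_in_def by blast
qed

lemma connected_in_invariant:
  assumes "\<And>x y. {x, y} \<in> E \<Longrightarrow> P x \<longleftrightarrow> P y" and "connected_in E x y"
  shows "P x \<longleftrightarrow> P y"
  using assms(2) unfolding connected_in_def
  by (induction rule: rtrancl_induct) (use assms(1) in auto)

lemma is_graph_finite_edges:
  assumes "is_graph V E"
  shows "finite E"
proof (rule finite_subset)
  show "E \<subseteq> Pow V"
  proof
    fix e assume "e \<in> E"
    with assms obtain x y where "x \<in> V" "y \<in> V" "e = {x, y}" unfolding is_graph_def by blast
    then show "e \<in> Pow V" by simp
  qed
  show "finite (Pow V)" using assms by (simp add: is_graph_def)
qed

lemma is_cut_commute: "is_cut E F A B \<longleftrightarrow> is_cut E F B A"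
  unfolding is_cut_def by (auto dest: connected_in_sym)

lemma min_cut_commute: "min_cut E w A B = min_cut E w B A"
  unfolding min_cut_def is_cut_commute[of E _ A B] ..

lemma min_cut_eqI:
  assumes "finite E" and "is_cut E F\<^sub>0 A B" and "sum w F\<^sub>0 \<le> x"
    and "\<And>F. is_cut E F A B \<Longrightarrow> x \<le> sum w F"
  shows "min_cut E w A B = x"
  unfolding min_cut_def
proof (rule Min_eqI)
  have "{sum w F | F. is_cut E F A B} \<subseteq> sum w ` Pow E" by (auto simp: is_cut_def)
  then show "finite {sum w F | F. is_cut E F A B}" using assms(1) finite_surj by blast
  have "sum w F\<^sub>0 = x" using assms(3) assms(4)[OF assms(2)] by linarith
  then show "x \<in> {sum w F | F. is_cut E F A B}" using assms(2) by auto
next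
  fix y assume "y \<in> {sum w F | F. is_cut E F A B}"
  then show "x \<le> y" using assms(4) by auto
qed

lemma finite_cut: "finite E \<Longrightarrow> is_cut E F A B \<Longrightarrow> finite F"
  unfolding is_cut_def by (blast intro: finite_subset)

lemma cut_meets_connecting_edges:
  assumes "is_cut E F A B" and "P \<subseteq> E" and "connected_in P a b" and "a \<in> A" and "b \<in> B"
  shows "P \<inter> F \<noteq> {}"
proof
  assume "P \<inter> F = {}"
  with assms(2) have "connected_in (E - F) a b" by (blast intro: connected_in_mono[OF _ assms(3)])
  with assms(1,4,5) show False by (auto simp: is_cut_def)
qed

definition crosses :: "'v set \<Rightarrow> 'v set \<Rightarrow> bool" where
  "crosses X e \<longleftrightarrow> e \<inter> X \<noteq> {} \<and> e - X \<noteq> {}"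

definition edge_boundary :: "'v set set \<Rightarrow> 'v set \<Rightarrow> 'v set set" where
  "edge_boundary E X = {e \<in> E. crosses X e}"

lemma crosses_pair [simp]: "i \<noteq> j \<Longrightarrow> crosses X {i, j} \<longleftrightarrow> (i \<in> X) \<noteq> (j \<in> X)"
  by (auto simp: crosses_def)

lemma edge_boundary_complement:
  "\<forall>e\<in>E. e \<subseteq> V \<Longrightarrow> edge_boundary E (V - X) = edge_boundary E X"
  unfolding edge_boundary_def crosses_def by blast

lemma edge_boundary_Int: "P \<subseteq> E \<Longrightarrow> edge_boundary E X \<inter> P = edge_boundary P X"
  unfolding edge_boundary_def crosses_def by blast

lemma is_cut_edge_boundary:
  assumes "A \<subseteq> X" and "B \<inter> X = {}"
  shows "is_cut E (edge_boundary E X) A B"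
proof -
  have "a \<in> X \<longleftrightarrow> b \<in> X" if "connected_in (E - edge_boundary E X) a b" for a b
    by (rule connected_in_invariant[OF _ that]) (auto simp: edge_boundary_def crosses_def)
  with assms show ?thesis by (auto simp: is_cut_def edge_boundary_def crosses_def)
qed

lemma edge_boundary_pair:
  assumes "is_graph V E" and "e \<in> edge_boundary E A"
  obtains i j where "e = {i, j}" and "i \<in> A" and "j \<in> V - A"
proof -
  from assms(2) have e: "e \<in> E" "e \<inter> A \<noteq> {}" "e - A \<noteq> {}"
    unfolding edge_boundary_def crosses_def by auto
  with assms(1) obtain x y where xy: "x \<in> V" "y \<in> V" "e = {x, y}"
    unfolding is_graph_def by blast
  with e consider "x \<in> A" "y \<notin> A" | "y \<in> A" "x \<notin> A" by auto
  then show thesis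
  proof cases
    case 1 with xy show thesis by (intro that[of x y]) auto
  next
    case 2 with xy show thesis by (intro that[of y x]) auto
  qed
qed

lemma min_cut_edge_boundary:
  assumes graph: "is_graph V E" and w: "\<forall>e\<in>E. w e \<ge> 0"
  shows "min_cut E w A (V - A) = sum w (edge_boundary E A)"
proof (rule min_cut_eqI[OF is_graph_finite_edges[OF graph]])
  show "is_cut E (edge_boundary E A) A (V - A)"
    by (rule is_cut_edge_boundary) auto
  fix F assume F: "is_cut E F A (V - A)"
  have "edge_boundary E A \<subseteq> F"
  proof
    fix e assume e: "e \<in> edge_boundary E A"
    then obtain i j where "e = {i, j}" "i \<in> A" "j \<in> V - A"
      by (rule edge_boundary_pair[OF graph])
    moreover have "e \<in> E" using e by (simp add: edge_boundary_def)
    ultimately show "e \<in> F"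
      using cut_meets_connecting_edges[OF F, of "{e}" i j] by (auto intro: connected_in_edge)
  qed
  moreover have "F \<subseteq> E" using F by (simp add: is_cut_def)
  ultimately show "sum w (edge_boundary E A) \<le> sum w F"
    using w is_graph_finite_edges[OF graph] by (intro sum_mono2) (auto intro: finite_subset)
qed simp

section \<open>Routing one graph through another\<close>

definition routed_weight ::
    "'a set set \<Rightarrow> ('a set \<Rightarrow> real) \<Rightarrow> ('a set \<Rightarrow> 'v set set) \<Rightarrow> 'v set \<Rightarrow> real" where
  "routed_weight E\<^sub>0 c route g = sum c {e \<in> E\<^sub>0. g \<in> route e}"

lemma sum_routed_weight:
  assumes "finite E\<^sub>0" and "finite F"
  shows "sum (routed_weight E\<^sub>0 c route) F = (\<Sum>e\<in>E\<^sub>0. c e * card (F \<inter> route e))"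
proof -
  have "sum (routed_weight E\<^sub>0 c route) F = (\<Sum>g\<in>F. \<Sum>e\<in>E\<^sub>0. if g \<in> route e then c e else 0)"
    unfolding routed_weight_def using assms(1) by (simp add: sum.inter_filter)
  also have "\<dots> = (\<Sum>e\<in>E\<^sub>0. \<Sum>g\<in>F. if g \<in> route e then c e else 0)"
    by (rule sum.swap)
  also have "\<dots> = (\<Sum>e\<in>E\<^sub>0. c e * card (F \<inter> route e))"
    using assms(2) by (simp add: sum.If_cases Int_def mult.commute)
  finally show ?thesis .
qed

lemma sum_edge_boundary_of_bool:
  fixes c :: "'v set \<Rightarrow> real"
  shows "finite E \<Longrightarrow> sum c (edge_boundary E A) = (\<Sum>e\<in>E. c e * of_bool (e \<in> edge_boundary E A))"
  unfolding edge_boundary_def by (simp add: sum.inter_filter of_bool_def if_distrib cong: if_cong)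

lemma sum_edge_boundary_le_routed_cut:
  assumes graph: "is_graph U E\<^sub>0" and c: "\<forall>e\<in>E\<^sub>0. c e \<ge> 0" and "finite E"
    and route_edges: "\<And>e. e \<in> E\<^sub>0 \<Longrightarrow> route e \<subseteq> E"
    and route_connects: "\<And>i j. {i, j} \<in> E\<^sub>0 \<Longrightarrow> connected_in (route {i, j}) (v i) (v j)"
    and F: "is_cut E F (v ` A) (v ` (U - A))"
  shows "sum c (edge_boundary E\<^sub>0 A) \<le> sum (routed_weight E\<^sub>0 c route) F"
proof -
  have fin\<^sub>0: "finite E\<^sub>0" using graph by (rule is_graph_finite_edges)
  have fin: "finite F" using \<open>finite E\<close> F by (rule finite_cut)
  have "of_bool (e \<in> edge_boundary E\<^sub>0 A) \<le> real (card (F \<inter> route e))" if e: "e \<in> E\<^sub>0" for e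
  proof (cases "e \<in> edge_boundary E\<^sub>0 A")
    case True
    then obtain i j where ij: "e = {i, j}" "i \<in> A" "j \<in> U - A"
      by (rule edge_boundary_pair[OF graph])
    then have "route e \<inter> F \<noteq> {}"
      using cut_meets_connecting_edges[OF F route_edges[OF e]] route_connects e by blast
    with fin True show ?thesis by (simp add: card_gt_0_iff Int_commute Suc_le_eq)
  qed simp
  with c have "(\<Sum>e\<in>E\<^sub>0. c e * of_bool (e \<in> edge_boundary E\<^sub>0 A))
                \<le> (\<Sum>e\<in>E\<^sub>0. c e * card (F \<inter> route e))"
    by (intro sum_mono mult_left_mono) simp_all
  then show ?thesis
    by (simp add: sum_edge_boundary_of_bool[OF fin\<^sub>0] sum_routed_weight[OF fin\<^sub>0 fin])
qed

lemma min_cut_routed_weight: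
  assumes graph: "is_graph U E\<^sub>0" and c: "\<forall>e\<in>E\<^sub>0. c e \<ge> 0" and "finite E"
    and route_edges: "\<And>e. e \<in> E\<^sub>0 \<Longrightarrow> route e \<subseteq> E"
    and route_connects: "\<And>i j. {i, j} \<in> E\<^sub>0 \<Longrightarrow> connected_in (route {i, j}) (v i) (v j)"
    and cut: "is_cut E F\<^sub>0 (v ` A) (v ` (U - A))"
    and cut_sparse:
      "\<And>e. e \<in> E\<^sub>0 \<Longrightarrow> card (F\<^sub>0 \<inter> route e) \<le> of_bool (e \<in> edge_boundary E\<^sub>0 A)"
  shows "min_cut E (routed_weight E\<^sub>0 c route) (v ` A) (v ` (U - A)) = sum c (edge_boundary E\<^sub>0 A)"
proof (rule min_cut_eqI[OF \<open>finite E\<close> cut])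
  have fin\<^sub>0: "finite E\<^sub>0" using graph by (rule is_graph_finite_edges)
  have "real (card (F\<^sub>0 \<inter> route e)) \<le> of_bool (e \<in> edge_boundary E\<^sub>0 A)" if "e \<in> E\<^sub>0" for e
    using cut_sparse[OF that] by (metis of_nat_le_iff of_nat_of_bool)
  with c have "(\<Sum>e\<in>E\<^sub>0. c e * card (F\<^sub>0 \<inter> route e))
                \<le> (\<Sum>e\<in>E\<^sub>0. c e * of_bool (e \<in> edge_boundary E\<^sub>0 A))"
    by (intro sum_mono mult_left_mono) auto
  then show "sum (routed_weight E\<^sub>0 c route) F\<^sub>0 \<le> sum c (edge_boundary E\<^sub>0 A)"
    using finite_cut[OF \<open>finite E\<close> cut]
    by (simp add: sum_edge_boundary_of_bool[OF fin\<^sub>0] sum_routed_weight[OF fin\<^sub>0])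
qed (rule sum_edge_boundary_le_routed_cut[of U E\<^sub>0 c E route v, OF assms(1-5)])

section \<open>Contiguous regions\<close>

lemma mem_cyc_region:
  assumes "1 \<le> a" and "a \<le> N" and "m < N"
  shows "t \<in> cyc_region N a m \<longleftrightarrow> t \<in> {1..N} \<and> (a \<le> t \<and> t \<le> a + m \<or> t + N \<le> a + m)"
proof
  assume "t \<in> cyc_region N a m"
  then obtain k where k: "k \<le> m" "t = (a - 1 + k) mod N + 1" by (auto simp: cyc_region_def)
  show "t \<in> {1..N} \<and> (a \<le> t \<and> t \<le> a + m \<or> t + N \<le> a + m)"
  proof (cases "a - 1 + k < N")
    case True
    with k assms show ?thesis by simp
  next
    case False
    then have "(a - 1 + k) mod N = a - 1 + k - N"
      using k assms by (simp add: le_mod_geq)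
    with k assms False show ?thesis by simp
  qed
next
  assume t: "t \<in> {1..N} \<and> (a \<le> t \<and> t \<le> a + m \<or> t + N \<le> a + m)"
  define k where "k = (if a \<le> t then t - a else t + N - a)"
  have "k \<le> m" using t by (auto simp: k_def)
  moreover have "t = (a - 1 + k) mod N + 1"
  proof (cases "a \<le> t")
    case True
    then have "a - 1 + k = t - 1" "t - 1 < N" using t assms by (auto simp: k_def)
    with t show ?thesis by simp
  next
    case False
    then have "a - 1 + k = (t - 1) + N" using t assms by (simp add: k_def)
    then have "(a - 1 + k) mod N = (t - 1) mod N" by (simp only: mod_add_self2)
    moreover have "t - 1 < N" using t by auto
    ultimately show ?thesis using t by simp
  qed
  ultimately show "t \<in> cyc_region N a m" by (auto simp: cyc_region_def)
qed

lemma contiguous_interval: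
  assumes "contiguous N R"
  obtains a b where "1 \<le> a" "a \<le> b" "b \<le> N" and "R = {a..b} \<or> R = {1..N} - {a..b}"
proof -
  have proper: "R \<subset> {1..N}" using assms by (simp add: contiguous_def)
  from assms have "\<exists>a\<in>{1..N}. \<exists>m. R = cyc_region N a m" by (simp add: contiguous_def)
  then obtain a m where a: "1 \<le> a" "a \<le> N" and R: "R = cyc_region N a m" by auto
  have "m < N - 1"
  proof (rule ccontr)
    assume "\<not> m < N - 1"
    then have "cyc_region N a (N - 1) \<subseteq> R"
      unfolding R cyc_region_def by auto
    moreover have "cyc_region N a (N - 1) = {1..N}"
      using a by (auto simp: mem_cyc_region)
    ultimately show False using proper by auto
  qed
  show thesis
  proof (cases "a + m \<le> N")
    case True
    then have "R = {a..a + m}" using a \<open>m < N - 1\<close> by (auto simp: R mem_cyc_region)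
    with True a show thesis by (intro that[of a "a + m"]) auto
  next
    case False
    then have "R = {1..N} - {a + m + 1 - N..a - 1}"
      using a \<open>m < N - 1\<close> by (auto simp: R mem_cyc_region)
    with False a \<open>m < N - 1\<close> show thesis by (intro that[of "a + m + 1 - N" "a - 1"]) auto
  qed
qed

section \<open>Routing the complete graph through a grid\<close>

definition lattice_pt :: "nat \<Rightarrow> nat \<Rightarrow> nat" where
  "lattice_pt x y = prod_encode (x, y)"

definition hedge :: "nat \<Rightarrow> nat \<Rightarrow> nat set" where
  "hedge x y = {lattice_pt x y, lattice_pt (Suc x) y}"

definition vedge :: "nat \<Rightarrow> nat \<Rightarrow> nat set" where
  "vedge x y = {lattice_pt x y, lattice_pt x (Suc y)}"

definition grid_vertices :: "nat \<Rightarrow> nat set" where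
  "grid_vertices n = (\<lambda>(x, y). lattice_pt x y) ` ({..n} \<times> {..n})"

definition grid_edges :: "nat \<Rightarrow> nat set set" where
  "grid_edges n = (\<lambda>(x, y). hedge x y) ` ({..<n} \<times> {..n}) \<union> (\<lambda>(x, y). vedge x y) ` ({..n} \<times> {..<n})"

definition grid_route :: "nat \<Rightarrow> nat \<Rightarrow> nat set set" where
  "grid_route i j =
     (\<lambda>y. vedge i y) ` {..<j - i} \<union> (\<lambda>x. hedge x (j - i)) ` {i..<j} \<union> (\<lambda>y. vedge j y) ` {..<j - i}"

definition lattice_box :: "nat \<Rightarrow> nat \<Rightarrow> nat set" where
  "lattice_box a b = (\<lambda>(x, y). lattice_pt x y) ` ({a..b} \<times> {..b - a})"

lemma lattice_pt_eq_iff [simp]: "lattice_pt x y = lattice_pt x' y' \<longleftrightarrow> x = x' \<and> y = y'"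
  by (simp add: lattice_pt_def)

lemma hedge_eq_iff [simp]: "hedge x y = hedge x' y' \<longleftrightarrow> x = x' \<and> y = y'"
  by (auto simp: hedge_def doubleton_eq_iff)

lemma vedge_eq_iff [simp]: "vedge x y = vedge x' y' \<longleftrightarrow> x = x' \<and> y = y'"
  by (auto simp: vedge_def doubleton_eq_iff)

lemma hedge_neq_vedge [simp]: "hedge x y \<noteq> vedge x' y'" "vedge x' y' \<noteq> hedge x y"
  by (auto simp: hedge_def vedge_def doubleton_eq_iff)

lemma lattice_pt_in_box [simp]:
  "lattice_pt x y \<in> lattice_box a b \<longleftrightarrow> a \<le> x \<and> x \<le> b \<and> y \<le> b - a"
  by (auto simp: lattice_box_def)

lemma crosses_box_vedge [simp]:
  "crosses (lattice_box a b) (vedge x y) \<longleftrightarrow> a \<le> x \<and> x \<le> b \<and> y = b - a"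
  by (auto simp: crosses_def vedge_def)

lemma crosses_box_hedge [simp]:
  "crosses (lattice_box a b) (hedge x y) \<longleftrightarrow> y \<le> b - a \<and> a \<le> b \<and> (Suc x = a \<or> x = b)"
  by (auto simp: crosses_def hedge_def)

lemma mem_grid_route:
  "g \<in> grid_route i j \<longleftrightarrow>
     (\<exists>y < j - i. g = vedge i y) \<or> (\<exists>x. i \<le> x \<and> x < j \<and> g = hedge x (j - i)) \<or>
     (\<exists>y < j - i. g = vedge j y)"
  by (auto simp: grid_route_def)

lemma card_edge_boundary_grid_route:
  assumes "i < j"
  shows "card (edge_boundary (grid_route i j) (lattice_box a b))
           \<le> of_bool ((i \<in> {a..b}) \<noteq> (j \<in> {a..b}))"
proof -
  let ?B = "edge_boundary (grid_route i j) (lattice_box a b)"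
  have B: "g \<in> ?B \<longleftrightarrow> g \<in> grid_route i j \<and> crosses (lattice_box a b) g" for g
    by (simp add: edge_boundary_def)
  have fin: "finite ?B" by (simp add: grid_route_def edge_boundary_def)
  show ?thesis
  proof (cases "(i \<in> {a..b}) = (j \<in> {a..b})")
    case True
    then have "?B = {}" using assms by (auto simp: B mem_grid_route; arith)
    then show ?thesis by simp
  next
    case False
    then have "\<forall>g\<in>?B. \<forall>g'\<in>?B. g = g'" using assms by (auto simp: B mem_grid_route)
    with fin False show ?thesis by (simp add: card_le_Suc0_iff_eq)
  qed
qed

definition boundary_pt :: "nat \<Rightarrow> nat" where
  "boundary_pt k = lattice_pt k 0"

definition edge_route :: "nat set \<Rightarrow> nat set set" where
  "edge_route e = grid_route (Min e) (Max e)"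

lemma connected_in_column:
  assumes "\<And>y. y < h \<Longrightarrow> vedge x y \<in> E"
  shows "connected_in E (lattice_pt x 0) (lattice_pt x h)"
  using assms
proof (induction h)
  case (Suc h)
  have "connected_in E (lattice_pt x h) (lattice_pt x (Suc h))"
    using Suc.prems[of h] by (auto simp: vedge_def intro: connected_in_edge)
  with Suc show ?case by (auto intro: connected_in_trans)
qed (rule connected_in_refl)

lemma connected_in_row:
  assumes "i \<le> j" and "\<And>x. i \<le> x \<Longrightarrow> x < j \<Longrightarrow> hedge x y \<in> E"
  shows "connected_in E (lattice_pt i y) (lattice_pt j y)"
  using assms
proof (induction j rule: dec_induct)
  case (step j)
  have "connected_in E (lattice_pt j y) (lattice_pt (Suc j) y)"
    using step.prems[of j] step.hyps by (auto simp: hedge_def intro: connected_in_edge)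
  with step show ?case by (auto intro: connected_in_trans)
qed (rule connected_in_refl)

lemma connected_in_grid_route:
  assumes "i \<le> j"
  shows "connected_in (grid_route i j) (lattice_pt i 0) (lattice_pt j 0)"
proof -
  let ?h = "j - i"
  have "connected_in (grid_route i j) (lattice_pt i 0) (lattice_pt i ?h)"
    by (rule connected_in_column) (simp add: mem_grid_route)
  also have "connected_in (grid_route i j) (lattice_pt i ?h) (lattice_pt j ?h)"
    by (rule connected_in_row[OF assms]) (auto simp: mem_grid_route)
  also have "connected_in (grid_route i j) (lattice_pt j ?h) (lattice_pt j 0)"
    by (rule connected_in_sym, rule connected_in_column) (simp add: mem_grid_route)
  finally show ?thesis .
qed

lemma connected_in_edge_route:
  assumes "i \<noteq> j"
  shows "connected_in (edge_route {i, j}) (boundary_pt i) (boundary_pt j)"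
proof (cases "i < j")
  case True
  then show ?thesis
    using connected_in_grid_route[of i j] by (simp add: edge_route_def boundary_pt_def)
next
  case False
  with assms have "connected_in (edge_route {j, i}) (boundary_pt j) (boundary_pt i)"
    using connected_in_grid_route[of j i] by (simp add: edge_route_def boundary_pt_def)
  then show ?thesis by (simp add: insert_commute connected_in_sym)
qed

lemma hedge_in_grid_edges [simp]: "hedge x y \<in> grid_edges n \<longleftrightarrow> x < n \<and> y \<le> n"
  by (auto simp: grid_edges_def)

lemma vedge_in_grid_edges [simp]: "vedge x y \<in> grid_edges n \<longleftrightarrow> x \<le> n \<and> y < n"
  by (auto simp: grid_edges_def)

lemma grid_route_subset_grid_edges: "j \<le> n \<Longrightarrow> grid_route i j \<subseteq> grid_edges n"
  by (auto simp: mem_grid_route; arith)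

lemma finite_grid_edges: "finite (grid_edges n)"
  by (simp add: grid_edges_def)

lemma complete_edge_cases:
  assumes "e \<in> complete_edges n"
  obtains i j where "e = {i, j}" "1 \<le> i" "i < j" "j \<le> n"
  using assms unfolding complete_edges_def
  by (auto simp: insert_commute elim!: linorder_neqE_nat)

lemma is_graph_complete_edges: "is_graph {1..n} (complete_edges n)"
  by (auto simp: is_graph_def complete_edges_def)

lemma min_cut_grid_interval:
  assumes c: "\<forall>e\<in>complete_edges n. c e \<ge> 0"
  shows "min_cut (grid_edges n) (routed_weight (complete_edges n) c edge_route)
           (boundary_pt ` {a..b}) (boundary_pt ` ({1..n} - {a..b}))
         = sum c (edge_boundary (complete_edges n) {a..b})"
proof (rule min_cut_routed_weight[OF is_graph_complete_edges c finite_grid_edges])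
  show route_edges: "edge_route e \<subseteq> grid_edges n" if "e \<in> complete_edges n" for e
    using that by (elim complete_edge_cases) (simp add: edge_route_def grid_route_subset_grid_edges)
  show "connected_in (edge_route {i, j}) (boundary_pt i) (boundary_pt j)"
    if "{i, j} \<in> complete_edges n" for i j
    using that by (intro connected_in_edge_route) (auto simp: complete_edges_def doubleton_eq_iff)
  show "is_cut (grid_edges n) (edge_boundary (grid_edges n) (lattice_box a b))
          (boundary_pt ` {a..b}) (boundary_pt ` ({1..n} - {a..b}))"
    by (rule is_cut_edge_boundary) (auto simp: boundary_pt_def)
  show "card (edge_boundary (grid_edges n) (lattice_box a b) \<inter> edge_route e)
          \<le> of_bool (e \<in> edge_boundary (complete_edges n) {a..b})"
    if e: "e \<in> complete_edges n" for e
  proof -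
    obtain i j where ij: "e = {i, j}" "i < j" using e by (rule complete_edge_cases)
    have "edge_boundary (grid_edges n) (lattice_box a b) \<inter> edge_route e
          = edge_boundary (grid_route i j) (lattice_box a b)"
      using route_edges[OF e] ij by (simp add: edge_boundary_Int edge_route_def)
    also have "card \<dots> \<le> of_bool ((i \<in> {a..b}) \<noteq> (j \<in> {a..b}))"
      using ij(2) by (rule card_edge_boundary_grid_route)
    finally show ?thesis using e ij by (simp add: edge_boundary_def)
  qed
qed

lemma min_cut_grid_contiguous:
  assumes "contiguous n R" and c: "\<forall>e\<in>complete_edges n. c e \<ge> 0"
  shows "min_cut (grid_edges n) (routed_weight (complete_edges n) c edge_route)
           (boundary_pt ` R) (boundary_pt ` ({1..n} - R))
         = sum c (edge_boundary (complete_edges n) R)"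
proof -
  obtain a b where ab: "1 \<le> a" "b \<le> n" and R: "R = {a..b} \<or> R = {1..n} - {a..b}"
    using assms(1) by (rule contiguous_interval)
  show ?thesis
  proof (cases "R = {a..b}")
    case True
    then show ?thesis using min_cut_grid_interval[OF c] by simp
  next
    case False
    with R ab have R': "R = {1..n} - {a..b}" "{1..n} - R = {a..b}" by auto
    have "edge_boundary (complete_edges n) R = edge_boundary (complete_edges n) {a..b}"
      unfolding R'(1) by (rule edge_boundary_complement) (auto simp: complete_edges_def)
    then show ?thesis
      using min_cut_grid_interval[OF c, of a b] R' by (simp add: min_cut_commute)
  qed
qed

section \<open>Planarity of lattice graphs\<close>

definition unit_edge :: "nat set \<Rightarrow> bool" where
  "unit_edge e \<longleftrightarrow> (\<exists>x y. e = hedge x y \<or> e = vedge x y)"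

definition plane_point :: "nat \<Rightarrow> complex" where
  "plane_point n = Complex (real (fst (prod_decode n))) (real (snd (prod_decode n)))"

definition straight_drawing :: "nat set \<Rightarrow> real \<Rightarrow> complex" where
  "straight_drawing e = linepath (plane_point (Min e)) (plane_point (Max e))"

lemma plane_point_lattice_pt [simp]: "plane_point (lattice_pt x y) = Complex (real x) (real y)"
  by (simp add: plane_point_def lattice_pt_def)

lemma inj_plane_point: "inj plane_point"
proof (rule injI)
  fix m n assume "plane_point m = plane_point n"
  then have "prod_decode m = prod_decode n"
    by (simp add: plane_point_def complex_eq_iff prod_eq_iff)
  then show "m = n" by (metis prod_decode_inverse)
qed

lemma straight_drawing_pair:
  assumes "u \<noteq> v"
  shows "path_image (straight_drawing {u, v}) = closed_segment (plane_point u) (plane_point v)"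
    and "{pathstart (straight_drawing {u, v}), pathfinish (straight_drawing {u, v})} = plane_point ` {u, v}"
    and "arc (straight_drawing {u, v})"
proof -
  obtain p q where pq: "straight_drawing {u, v} = linepath p q"
      "p = plane_point u \<and> q = plane_point v \<or> p = plane_point v \<and> q = plane_point u"
    by (cases "u \<le> v") (auto simp: straight_drawing_def min_def max_def)
  moreover have "plane_point u \<noteq> plane_point v"
    using assms inj_plane_point by (auto dest: injD)
  ultimately show "path_image (straight_drawing {u, v}) = closed_segment (plane_point u) (plane_point v)"
    and "{pathstart (straight_drawing {u, v}), pathfinish (straight_drawing {u, v})} = plane_point ` {u, v}"
    and "arc (straight_drawing {u, v})"
    by (auto simp: closed_segment_commute)
qed

lemma path_image_hedge:
  "path_image (straight_drawing (hedge x y)) = {z. Im z = y \<and> x \<le> Re z \<and> Re z \<le> x + 1}"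
proof -
  have ne: "lattice_pt x y \<noteq> lattice_pt (Suc x) y" by simp
  have "path_image (straight_drawing (hedge x y))
        = closed_segment (Complex (real x) (real y)) (Complex (real (Suc x)) (real y))"
    unfolding hedge_def straight_drawing_pair(1)[OF ne] by simp
  also have "\<dots> = {z. Im z = y \<and> Re z \<in> closed_segment (real x) (real (Suc x))}"
    by (subst closed_segment_same_Im) simp_all
  also have "closed_segment (real x) (real (Suc x)) = {real x..real x + 1}"
    by (simp add: closed_segment_eq_real_ivl)
  finally show ?thesis by auto
qed

lemma path_image_vedge:
  "path_image (straight_drawing (vedge x y)) = {z. Re z = x \<and> y \<le> Im z \<and> Im z \<le> y + 1}"
proof -
  have ne: "lattice_pt x y \<noteq> lattice_pt x (Suc y)" by simp
  have "path_image (straight_drawing (vedge x y))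
        = closed_segment (Complex (real x) (real y)) (Complex (real x) (real (Suc y)))"
    unfolding vedge_def straight_drawing_pair(1)[OF ne] by simp
  also have "\<dots> = {z. Re z = x \<and> Im z \<in> closed_segment (real y) (real (Suc y))}"
    by (subst closed_segment_same_Re) simp_all
  also have "closed_segment (real y) (real (Suc y)) = {real y..real y + 1}"
    by (simp add: closed_segment_eq_real_ivl)
  finally show ?thesis by auto
qed

lemma lattice_point_on_unit_edge:
  assumes "unit_edge e" and "Complex (real a) (real b) \<in> path_image (straight_drawing e)"
  shows "Complex (real a) (real b) \<in> plane_point ` e"
proof -
  from assms(1) obtain x y where "e = hedge x y \<or> e = vedge x y" by (auto simp: unit_edge_def)
  then show ?thesis
  proof
    assume e: "e = hedge x y"
    with assms(2) have "b = y" "a = x \<or> a = Suc x" by (auto simp: path_image_hedge)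
    with e show ?thesis by (force simp: hedge_def)
  next
    assume e: "e = vedge x y"
    with assms(2) have "a = x" "b = y \<or> b = Suc y" by (auto simp: path_image_vedge)
    with e show ?thesis by (force simp: vedge_def)
  qed
qed

lemma unit_edge_pair:
  assumes "unit_edge e"
  obtains u v where "u \<noteq> v" and "e = {u, v}"
  using assms unfolding unit_edge_def hedge_def vedge_def by (metis lattice_pt_eq_iff n_not_Suc_n)

lemma distinct_unit_intervals_meet_at_nat:
  fixes r :: real
  assumes "real x \<le> r" "r \<le> real x + 1" "real x' \<le> r" "r \<le> real x' + 1" and "x \<noteq> x'"
  shows "r \<in> \<nat>"
proof (cases "x < x'")
  case True
  then have "r = real x'" using assms(1-4) by linarith
  then show ?thesis by simp
next
  case False
  with assms(5) have "r = real x" using assms(1-4) by linarith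
  then show ?thesis by simp
qed

lemma unit_edges_meet_at_lattice_points:
  assumes "unit_edge e" "unit_edge e'" "e \<noteq> e'"
    and "z \<in> path_image (straight_drawing e)" "z \<in> path_image (straight_drawing e')"
  shows "Re z \<in> \<nat> \<and> Im z \<in> \<nat>"
proof -
  from assms(1) obtain x y where e: "e = hedge x y \<or> e = vedge x y" by (auto simp: unit_edge_def)
  from assms(2) obtain x' y' where e': "e' = hedge x' y' \<or> e' = vedge x' y'" by (auto simp: unit_edge_def)
  from e e' assms(3-5) show ?thesis
    by (auto simp: path_image_hedge path_image_vedge intro: distinct_unit_intervals_meet_at_nat)
qed

lemma planar_unit_edges:
  assumes "\<And>e. e \<in> E \<Longrightarrow> unit_edge e \<and> e \<subseteq> V"
  shows "planar V E"
  unfolding planar_def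
proof (intro exI conjI ballI impI)
  show "inj_on plane_point V" using inj_plane_point by (rule inj_on_subset) simp
  fix e assume e: "e \<in> E"
  then obtain u v where uv: "u \<noteq> v" "e = {u, v}"
    using assms unit_edge_pair by blast
  show "arc (straight_drawing e)" using straight_drawing_pair(3)[OF uv(1)] uv(2) by simp
  show "{pathstart (straight_drawing e), pathfinish (straight_drawing e)} = plane_point ` e"
    using straight_drawing_pair(2)[OF uv(1)] uv(2) by simp
  show "path_image (straight_drawing e) \<inter> plane_point ` V = plane_point ` e"
  proof
    show "path_image (straight_drawing e) \<inter> plane_point ` V \<subseteq> plane_point ` e"
      using lattice_point_on_unit_edge assms[OF e] by (auto simp: plane_point_def)
    show "plane_point ` e \<subseteq> path_image (straight_drawing e) \<inter> plane_point ` V"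
      using assms[OF e] straight_drawing_pair(1)[OF uv(1)] uv(2) by auto
  qed
  fix e' assume e': "e' \<in> E" and "e \<noteq> e'"
  show "path_image (straight_drawing e) \<inter> path_image (straight_drawing e')
          \<subseteq> plane_point ` (e \<inter> e')"
  proof
    fix z assume z: "z \<in> path_image (straight_drawing e) \<inter> path_image (straight_drawing e')"
    with unit_edges_meet_at_lattice_points assms[OF e] assms[OF e'] \<open>e \<noteq> e'\<close>
    obtain a b :: nat where ab: "z = Complex (real a) (real b)"
      by (metis IntD1 IntD2 Nats_cases complex_surj)
    with z lattice_point_on_unit_edge assms[OF e] assms[OF e']
    obtain u u' where "u \<in> e" "u' \<in> e'" "z = plane_point u" "z = plane_point u'"
      by (metis IntD1 IntD2 imageE)
    with inj_plane_point show "z \<in> plane_point ` (e \<inter> e')" by (metis IntI image_eqI injD)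
  qed
qed

lemma grid_edges_unit_edges: "e \<in> grid_edges n \<Longrightarrow> unit_edge e \<and> e \<subseteq> grid_vertices n"
  by (auto simp: grid_edges_def grid_vertices_def unit_edge_def hedge_def vedge_def)

lemma is_graph_grid: "is_graph (grid_vertices n) (grid_edges n)"
  unfolding is_graph_def
proof (intro conjI ballI)
  show "finite (grid_vertices n)" by (simp add: grid_vertices_def)
  fix e assume e: "e \<in> grid_edges n"
  then obtain u v where "u \<noteq> v" "e = {u, v}"
    using grid_edges_unit_edges unit_edge_pair by blast
  with grid_edges_unit_edges[OF e]
  show "\<exists>x y. x \<noteq> y \<and> x \<in> grid_vertices n \<and> y \<in> grid_vertices n \<and> e = {x, y}" by blast
qed

lemma card_grid_vertices_le: "1 \<le> n \<Longrightarrow> card (grid_vertices n) \<le> 4 * n ^ 4"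
proof -
  assume "1 \<le> n"
  have "card (grid_vertices n) \<le> card ({..n} \<times> {..n})"
    unfolding grid_vertices_def by (rule card_image_le) simp
  also have "\<dots> = (n + 1) ^ 2" by (simp add: power2_eq_square)
  also have "\<dots> \<le> (2 * n) ^ 2" using \<open>1 \<le> n\<close> by (intro power_mono) auto
  also have "\<dots> \<le> 4 * n ^ 4" using \<open>1 \<le> n\<close> by (simp add: power_increasing)
  finally show ?thesis .
qed

lemma card_grid_edges_le: "1 \<le> n \<Longrightarrow> card (grid_edges n) \<le> 4 * n ^ 4"
proof -
  assume "1 \<le> n"
  have "card (grid_edges n) \<le> card ({..<n} \<times> {..n}) + card ({..n} \<times> {..<n})"
    unfolding grid_edges_def by (intro card_Un_le[THEN order_trans] add_mono card_image_le) auto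
  also have "\<dots> = 2 * n * (n + 1)" by simp
  also have "\<dots> \<le> 2 * n * (2 * n)" using \<open>1 \<le> n\<close> by simp
  also have "\<dots> \<le> 4 * n ^ 4" using \<open>1 \<le> n\<close> by (simp add: power_increasing power2_eq_square[symmetric])
  finally show ?thesis .
qed

lemma bulkless_solution_entropy:
  assumes "solves_DBRP N S {1..N} (complete_edges N) c id" and "contiguous N R"
  shows "S R = sum c (edge_boundary (complete_edges N) R)"
proof -
  have c: "\<forall>e\<in>complete_edges N. c e \<ge> 0" and graph: "is_graph {1..N} (complete_edges N)"
    using assms(1) by (auto simp: solves_DBRP_def)
  have "S R = min_cut (complete_edges N) c R ({1..N} - R)"
    using assms by (simp add: solves_DBRP_def)
  also have "\<dots> = sum c (edge_boundary (complete_edges N) R)"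
    by (rule min_cut_edge_boundary[OF graph c])
  finally show ?thesis .
qed

lemma grid_solves_DBRP:
  assumes "solves_DBRP N S {1..N} (complete_edges N) c id"
  shows "solves_DBRP N S (grid_vertices N) (grid_edges N)
           (routed_weight (complete_edges N) c edge_route) boundary_pt"
proof -
  have c: "\<forall>e\<in>complete_edges N. c e \<ge> 0" using assms by (simp add: solves_DBRP_def)
  show ?thesis
    unfolding solves_DBRP_def
  proof (intro conjI allI impI ballI)
    show "is_graph (grid_vertices N) (grid_edges N)" by (rule is_graph_grid)
    show "routed_weight (complete_edges N) c edge_route e \<ge> 0" for e
      unfolding routed_weight_def using c by (intro sum_nonneg) auto
    show "boundary_pt ` {1..N} \<subseteq> grid_vertices N"
      by (auto simp: boundary_pt_def grid_vertices_def)
    show "inj_on boundary_pt {1..N}" by (simp add: inj_on_def boundary_pt_def)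
    fix R assume "contiguous N R"
    then show "min_cut (grid_edges N) (routed_weight (complete_edges N) c edge_route)
                 (boundary_pt ` R) (boundary_pt ` ({1..N} - R)) = S R"
      using min_cut_grid_contiguous[OF _ c] bulkless_solution_entropy[OF assms] by simp
  qed
qed

theorem lemma2:
  shows "\<exists>C::real. \<forall>N::nat. \<forall>S c. N \<ge> 2 \<and> entropy_data N S \<and>
      solves_DBRP N S {1..N} (complete_edges N) c id \<longrightarrow>
      (\<exists>(V :: nat set) (E :: nat set set) (w :: nat set \<Rightarrow> real) (v :: nat \<Rightarrow> nat).
         solves_DBRP N S V E w v \<and> planar V E \<and>
         real (card V) \<le> C * real N ^ 4 \<and> real (card E) \<le> C * real N ^ 4)"
proof (intro exI[of _ 4] allI impI)
  fix N :: nat and S c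
  assume "N \<ge> 2 \<and> entropy_data N S \<and> solves_DBRP N S {1..N} (complete_edges N) c id"
  then have N: "1 \<le> N" and bulkless: "solves_DBRP N S {1..N} (complete_edges N) c id" by auto
  have "planar (grid_vertices N) (grid_edges N)"
    using grid_edges_unit_edges by (rule planar_unit_edges)
  moreover have "real (card (grid_vertices N)) \<le> 4 * real N ^ 4"
    using card_grid_vertices_le[OF N] by (metis of_nat_le_iff of_nat_mult of_nat_numeral of_nat_power)
  moreover have "real (card (grid_edges N)) \<le> 4 * real N ^ 4"
    using card_grid_edges_le[OF N] by (metis of_nat_le_iff of_nat_mult of_nat_numeral of_nat_power)
  ultimately show "\<exists>(V :: nat set) E w (v :: nat \<Rightarrow> nat). solves_DBRP N S V E w v \<and> planar V E \<and>
      real (card V) \<le> 4 * real N ^ 4 \<and> real (card E) \<le> 4 * real N ^ 4"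
    using grid_solves_DBRP[OF bulkless] by blast
qed

end
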